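(* Let $(S,d)$ be a complete metric space with a Hausdorff topology $\sigma$ compatible with $d$, let $\phi,\phi_\epsilon:S\to(-\infty,+\infty]$ ($\epsilon>0$) and $\epsilon(\tau)>0$ with $\epsilon(\tau)\to0$ as $\tau\to0$, and suppose $\phi,(\phi_\epsilon)$ satisfy (A1), (A2), and (A3) with this choice $\epsilon(\tau)$ (see context). Let $r(\epsilon)>0$ with $r(\epsilon)\uparrow+\infty$ as $\epsilon\to0$, fix $u_{\star\star}\in S$, and set $\tilde\phi_\epsilon=\phi_\epsilon+\mathbb{I}_{\{d(u_{\star\star},\cdot)\le r(\epsilon)\}}$, where $\mathbb{I}_V=0$ on $V$ and $+\infty$ on $S\setminus V$. Then $\phi,(\tilde\phi_\epsilon)_{\epsilon>0}$ also satisfy (A1), (A2), and (A3) with the same choice $\epsilon(\tau)$.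
   Context: $\sigma$ compatible with $d$: if $u_n\stackrel{\sigma}{\rightharpoonup}u$, $v_n\stackrel{\sigma}{\rightharpoonup}v$ then $\liminf_n d(u_n,v_n)\ge d(u,v)$; if $d(u_n,v_n)\to0$ and $u_n\stackrel{\sigma}{\rightharpoonup}u$ then $v_n\stackrel{\sigma}{\rightharpoonup}u$. Local slope $|\partial\phi|(v)=\limsup_{w\stackrel{d}{\to}v}\frac{(\phi(v)-\phi(w))^+}{d(v,w)}$; relaxed slope $|\partial^-\phi|(u)=\inf\{\liminf_n|\partial\phi|(u_n): u_n\stackrel{\sigma}{\rightharpoonup}u,\ \sup_n\{d(u_n,u),\phi(u_n)\}<+\infty\}$; $\mathcal{Y}_\tau f(u)=\inf_{v}\{f(v)+\frac1{2\tau}d^2(v,u)\}$. For a family $(f_\epsilon)$: (A1) there exist $A,B>0,u_\star$ with $f_\epsilon\ge-A-Bd^2(\cdot,u_\star)$ for all $\epsilon$, and for $\epsilon_n\to0$, $\sup_{n,m}\{f_{\epsilon_n}(u_n),d(u_n,u_m)\}<\infty$ implies a $\sigma$-convergent subsequence; (A2) for $\epsilon_n\to0$, $\sup_{n,m}d(u_n,u_m)<\infty$ and $u_n\stackrel{\sigma}{\rightharpoonup}u$ imply $\liminf_n f_{\epsilon_n}(u_n)\ge\phi(u)$; (A3) for all $u_\tau\stackrel{\sigma}{\rightharpoonup}u$ with $\sup_\tau\{f_{\epsilon(\tau)}(u_\tau),d(u_\tau,u)\}<\infty$, $\liminf_{\tau\to0}\frac{f_{\epsilon(\tau)}(u_\tau)-\mathcal{Y}_\tau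 f_{\epsilon(\tau)}(u_\tau)}{\tau}\ge\frac12|\partial^-\phi|^2(u)$. *)

theory Defs
  imports "HOL-Analysis.Analysis"
begin

text \<open>The metric space (S,d) is the type 'a of class complete_space with d = dist;
  the second (Hausdorff) topology sigma is an abstract topology on 'a.\<close>

definition compatible :: "'a::metric_space topology \<Rightarrow> bool" where
  "compatible \<sigma> \<longleftrightarrow>
     (\<forall>us vs u v. limitin \<sigma> us u sequentially \<and> limitin \<sigma> vs v sequentially \<longrightarrow>
        liminf (\<lambda>n. ereal (dist (us n) (vs n))) \<ge> ereal (dist u v)) \<and>
     (\<forall>us vs u. (\<lambda>n. dist (us n) (vs n)) \<longlonglongrightarrow> 0 \<and> limitin \<sigma> us u sequentially \<longrightarrow>
        limitin \<sigma> vs u sequentially)"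

text \<open>Local slope: limsup over w -> v (w different from v) of (phi v - phi w)^+ / d(v,w);
  the outer max with 0 gives the usual value 0 at isolated points.\<close>
definition local_slope :: "('a::metric_space \<Rightarrow> ereal) \<Rightarrow> 'a \<Rightarrow> ereal" where
  "local_slope \<phi> v =
     max 0 (Limsup (at v) (\<lambda>w. max 0 (\<phi> v - \<phi> w) / ereal (dist v w)))"

definition relaxed_slope :: "'a::metric_space topology \<Rightarrow> ('a \<Rightarrow> ereal) \<Rightarrow> 'a \<Rightarrow> ereal" where
  "relaxed_slope \<sigma> \<phi> u =
     Inf {liminf (\<lambda>n. local_slope \<phi> (us n)) | us.
            limitin \<sigma> us u sequentially \<and>
            (\<exists>C::real. \<forall>n. dist (us n) u \<le> C \<and> \<phi> (us n) \<le> ereal C)}"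

definition yosida :: "real \<Rightarrow> ('a::metric_space \<Rightarrow> ereal) \<Rightarrow> 'a \<Rightarrow> ereal" where
  "yosida \<tau> f u = (INF v. f v + ereal ((dist v u)\<^sup>2 / (2 * \<tau>)))"

text \<open>Family (f eps)_{eps>0} is encoded as f :: real => 'a => ereal, only eps > 0 used.\<close>

definition A1 :: "'a::metric_space topology \<Rightarrow> (real \<Rightarrow> 'a \<Rightarrow> ereal) \<Rightarrow> bool" where
  "A1 \<sigma> f \<longleftrightarrow>
     (\<exists>A B :: real. \<exists>ustar. A > 0 \<and> B > 0 \<and>
        (\<forall>\<epsilon>>0. \<forall>u. f \<epsilon> u \<ge> ereal (- A - B * (dist u ustar)\<^sup>2))) \<and>
     (\<forall>eps us. (\<forall>n. eps n > 0) \<and> eps \<longlonglongrightarrow> 0 \<and>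
        (\<exists>C::real. \<forall>n m. f (eps n) (us n) \<le> ereal C \<and> dist (us n) (us m) \<le> C) \<longrightarrow>
        (\<exists>r u. strict_mono r \<and> limitin \<sigma> (us \<circ> r) u sequentially))"

definition A2 :: "'a::metric_space topology \<Rightarrow> ('a \<Rightarrow> ereal) \<Rightarrow> (real \<Rightarrow> 'a \<Rightarrow> ereal) \<Rightarrow> bool" where
  "A2 \<sigma> \<phi> f \<longleftrightarrow>
     (\<forall>eps us u. (\<forall>n. eps n > 0) \<and> eps \<longlonglongrightarrow> 0 \<and>
        (\<exists>C::real. \<forall>n m. dist (us n) (us m) \<le> C) \<and> limitin \<sigma> us u sequentially \<longrightarrow>
        liminf (\<lambda>n. f (eps n) (us n)) \<ge> \<phi> u)"

text \<open>(A3), with the family u_tau, tau -> 0, read along arbitrary sequences tau_n -> 0+.\<close>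
definition A3 :: "'a::metric_space topology \<Rightarrow> ('a \<Rightarrow> ereal) \<Rightarrow> (real \<Rightarrow> 'a \<Rightarrow> ereal)
                   \<Rightarrow> (real \<Rightarrow> real) \<Rightarrow> bool" where
  "A3 \<sigma> \<phi> f \<epsilon> \<longleftrightarrow>
     (\<forall>taus us u. (\<forall>n. taus n > 0) \<and> taus \<longlonglongrightarrow> 0 \<and> limitin \<sigma> us u sequentially \<and>
        (\<exists>C::real. \<forall>n. f (\<epsilon> (taus n)) (us n) \<le> ereal C \<and> dist (us n) u \<le> C) \<longrightarrow>
        liminf (\<lambda>n. (f (\<epsilon> (taus n)) (us n) - yosida (taus n) (f (\<epsilon> (taus n))) (us n))
                      / ereal (taus n))
          \<ge> (relaxed_slope \<sigma> \<phi> u) ^ 2 / 2)"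

end

theory Submission
  imports Defs
begin

text \<open>Adding the indicator of a ball only raises the functionals, which preserves (A1) and (A2).
  For (A3), the points u_tau stay in a fixed ball while the radius r(eps(tau)) tends to infinity;
  by the quadratic lower bound of (A1), once tau is small every competitor v outside the ball
  pays more than the value at u_tau in the Moreau-Yosida problem, so the Yosida transform at
  u_tau is unchanged and the difference quotients in (A3) coincide with the original ones.\<close>

lemma A1_mono:
  assumes "A1 \<sigma> f" and "\<And>e u. f e u \<le> g e u"
  shows "A1 \<sigma> g"
  unfolding A1_def
proof (intro conjI allI impI)
  obtain A B ustar where "A > 0" "B > 0"
    and lower: "\<And>e u. e > 0 \<Longrightarrow> ereal (- A - B * (dist u ustar)\<^sup>2) \<le> f e u"
    using assms(1) unfolding A1_def by blast
  then show "\<exists>A B. \<exists>ustar. A > 0 \<and> B > 0 \<and>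
      (\<forall>e>0. \<forall>u. g e u \<ge> ereal (- A - B * (dist u ustar)\<^sup>2))"
    using order_trans[OF lower assms(2)] by blast
next
  fix eps :: "nat \<Rightarrow> real" and us
  assume h: "(\<forall>n. eps n > 0) \<and> eps \<longlonglongrightarrow> 0 \<and>
      (\<exists>C::real. \<forall>n m. g (eps n) (us n) \<le> ereal C \<and> dist (us n) (us m) \<le> C)"
  then have "\<exists>C::real. \<forall>n m. f (eps n) (us n) \<le> ereal C \<and> dist (us n) (us m) \<le> C"
    using assms(2) order_trans by blast
  then show "\<exists>r u. strict_mono r \<and> limitin \<sigma> (us \<circ> r) u sequentially"
    using assms(1) h unfolding A1_def by blast
qed

lemma A2_mono:
  assumes "A2 \<sigma> \<phi> f" and "\<And>e u. f e u \<le> g e u"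
  shows "A2 \<sigma> \<phi> g"
  unfolding A2_def
proof (intro allI impI)
  fix eps :: "nat \<Rightarrow> real" and us u
  assume "(\<forall>n. eps n > 0) \<and> eps \<longlonglongrightarrow> 0 \<and>
      (\<exists>C::real. \<forall>n m. dist (us n) (us m) \<le> C) \<and> limitin \<sigma> us u sequentially"
  then have "\<phi> u \<le> liminf (\<lambda>n. f (eps n) (us n))"
    using assms(1) unfolding A2_def by blast
  also have "\<dots> \<le> liminf (\<lambda>n. g (eps n) (us n))"
    by (intro Liminf_mono always_eventually allI assms(2))
  finally show "\<phi> u \<le> liminf (\<lambda>n. g (eps n) (us n))" .
qed

lemma yosida_eq_if_dominated:
  assumes "\<And>v. f v \<le> g v" and "g w = f w"
    and "\<And>v. g v \<noteq> f v \<Longrightarrow> g w \<le> f v + ereal ((dist v w)\<^sup>2 / (2 * \<tau>))"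
  shows "yosida \<tau> g w = yosida \<tau> f w"
  unfolding yosida_def
proof (rule antisym)
  show "(INF v. g v + ereal ((dist v w)\<^sup>2 / (2 * \<tau>))) \<le> (INF v. f v + ereal ((dist v w)\<^sup>2 / (2 * \<tau>)))"
  proof (rule INF_greatest)
    fix v
    show "(INF v. g v + ereal ((dist v w)\<^sup>2 / (2 * \<tau>))) \<le> f v + ereal ((dist v w)\<^sup>2 / (2 * \<tau>))"
    proof (cases "g v = f v")
      case True
      have "(INF v. g v + ereal ((dist v w)\<^sup>2 / (2 * \<tau>))) \<le> g v + ereal ((dist v w)\<^sup>2 / (2 * \<tau>))"
        by (rule INF_lower) simp
      with True show ?thesis by simp
    next
      case False
      have "(INF v. g v + ereal ((dist v w)\<^sup>2 / (2 * \<tau>))) \<le> g w + ereal ((dist w w)\<^sup>2 / (2 * \<tau>))"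
        by (rule INF_lower) simp
      also have "\<dots> \<le> f v + ereal ((dist v w)\<^sup>2 / (2 * \<tau>))"
        using assms(3)[OF False] by simp
      finally show ?thesis .
    qed
  qed
qed (intro INF_mono' add_right_mono assms(1))

lemma quadratic_penalty_lower_bound:
  fixes A B D a x \<tau> :: real
  assumes "B > 0" "\<tau> > 0" "8 * B * \<tau> \<le> 1" "0 \<le> a" "a \<le> x + D" "0 \<le> D"
  shows "- A - 2 * B * D\<^sup>2 + 2 * B * x\<^sup>2 \<le> - A - B * a\<^sup>2 + x\<^sup>2 / (2 * \<tau>)"
proof -
  have "a\<^sup>2 \<le> (x + D)\<^sup>2"
    using assms by (intro power_mono) auto
  also have "\<dots> \<le> 2 * x\<^sup>2 + 2 * D\<^sup>2"
    using zero_le_power2[of "x - D"] by (simp add: power2_diff power2_sum)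
  finally have "B * a\<^sup>2 \<le> B * (2 * x\<^sup>2 + 2 * D\<^sup>2)"
    using \<open>B > 0\<close> by (intro mult_left_mono) auto
  then have "B * a\<^sup>2 \<le> 2 * B * x\<^sup>2 + 2 * B * D\<^sup>2"
    by (simp add: algebra_simps)
  moreover have "8 * B * \<tau> * x\<^sup>2 \<le> x\<^sup>2"
    using mult_right_mono[OF assms(3) zero_le_power2[of x]] by simp
  then have "4 * B * x\<^sup>2 \<le> x\<^sup>2 / (2 * \<tau>)"
    using assms(2) by (simp add: field_simps)
  ultimately show ?thesis by linarith
qed

lemma yosida_restrict_ball_eq:
  fixes f :: "'a::metric_space \<Rightarrow> ereal"
  assumes lower: "\<And>v. ereal (- A - B * (dist v ustar)\<^sup>2) \<le> f v"
    and "B > 0" "\<tau> > 0" "8 * B * \<tau> \<le> 1"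
    and "f w \<le> ereal C" "0 \<le> R" "dist u2 w + R \<le> \<rho>"
    and R: "C + A + 2 * B * (dist w ustar)\<^sup>2 \<le> 2 * B * R\<^sup>2"
  shows "yosida \<tau> (\<lambda>u. if dist u2 u \<le> \<rho> then f u else \<infinity>) w = yosida \<tau> f w"
proof (rule yosida_eq_if_dominated)
  show "(if dist u2 w \<le> \<rho> then f w else \<infinity>) = f w"
    using assms(6,7) by simp
  fix v
  assume "(if dist u2 v \<le> \<rho> then f v else \<infinity>) \<noteq> f v"
  then have "\<rho> < dist u2 v" by (simp split: if_splits)
  also have "\<dots> \<le> dist u2 w + dist v w"
    using dist_triangle[of u2 v w] by (simp add: dist_commute)
  finally have "R \<le> dist v w" using assms(7) by linarith
  then have "2 * B * R\<^sup>2 \<le> 2 * B * (dist v w)\<^sup>2"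
    using assms(2,6) by (intro mult_left_mono power_mono) auto
  moreover have "- A - 2 * B * (dist w ustar)\<^sup>2 + 2 * B * (dist v w)\<^sup>2
      \<le> - A - B * (dist v ustar)\<^sup>2 + (dist v w)\<^sup>2 / (2 * \<tau>)"
    using dist_triangle[of v ustar w] assms(2-4) by (intro quadratic_penalty_lower_bound) auto
  ultimately have "C \<le> - A - B * (dist v ustar)\<^sup>2 + (dist v w)\<^sup>2 / (2 * \<tau>)"
    using R by linarith
  then have "ereal C \<le> ereal (- A - B * (dist v ustar)\<^sup>2) + ereal ((dist v w)\<^sup>2 / (2 * \<tau>))"
    by simp
  also have "\<dots> \<le> f v + ereal ((dist v w)\<^sup>2 / (2 * \<tau>))"
    using lower[of v] by (rule add_right_mono)
  finally have "ereal C \<le> f v + ereal ((dist v w)\<^sup>2 / (2 * \<tau>))" .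
  then show "(if dist u2 w \<le> \<rho> then f w else \<infinity>) \<le> f v + ereal ((dist v w)\<^sup>2 / (2 * \<tau>))"
    using assms(5-7) by simp
qed simp

lemma eventually_yosida_restrict_ball_eq:
  assumes "B > 0"
    and lower: "\<And>e u. e > 0 \<Longrightarrow> ereal (- A - B * (dist u ustar)\<^sup>2) \<le> f e u"
    and "\<forall>\<tau>>0. \<epsilon> \<tau> > 0"
    and "filterlim (\<lambda>\<tau>. r (\<epsilon> \<tau>)) at_top (at_right 0)"
    and "\<forall>n. taus n > 0" and "taus \<longlonglongrightarrow> 0"
    and fC: "\<And>n. f (\<epsilon> (taus n)) (us n) \<le> ereal C"
    and dC: "\<And>n. dist (us n) u \<le> C"
  shows "\<forall>\<^sub>F n in sequentially.
    yosida (taus n) (\<lambda>v. if dist u2 v \<le> r (\<epsilon> (taus n)) then f (\<epsilon> (taus n)) v else \<infinity>) (us n)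
      = yosida (taus n) (f (\<epsilon> (taus n))) (us n)"
proof -
  define K where "K = C + A + 2 * B * (C + dist u ustar)\<^sup>2"
  define R where "R = sqrt (\<bar>K\<bar> / (2 * B))"
  have "0 \<le> R" "K \<le> 2 * B * R\<^sup>2"
    using \<open>B > 0\<close> by (simp_all add: R_def)
  have "filterlim taus (at_right 0) sequentially"
    using assms(5,6) by (intro tendsto_imp_filterlim_at_right) auto
  then have "filterlim (\<lambda>n. r (\<epsilon> (taus n))) at_top sequentially"
    by (rule filterlim_compose[OF assms(4)])
  then have "\<forall>\<^sub>F n in sequentially. R + C + dist u u2 \<le> r (\<epsilon> (taus n))"
    by (simp add: filterlim_at_top)
  moreover have "\<forall>\<^sub>F n in sequentially. taus n < 1 / (8 * B)"
    using assms(6) \<open>B > 0\<close> by (intro order_tendstoD(2)) auto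
  ultimately show ?thesis
  proof eventually_elim
    case (elim n)
    have lower_n: "ereal (- A - B * (dist v ustar)\<^sup>2) \<le> f (\<epsilon> (taus n)) v" for v
      using lower assms(3,5) by blast
    have "8 * B * taus n \<le> 1"
      using elim(2) \<open>B > 0\<close> by (simp add: field_simps)
    have "dist u2 (us n) \<le> C + dist u u2"
      using dist_triangle2[of u2 "us n" u] dC[of n] dist_commute[of u2 u] by linarith
    then have "dist u2 (us n) + R \<le> r (\<epsilon> (taus n))"
      using elim(1) by linarith
    have "dist (us n) ustar \<le> C + dist u ustar"
      using dist_triangle[of "us n" ustar u] dC[of n] by linarith
    then have "2 * B * (dist (us n) ustar)\<^sup>2 \<le> 2 * B * (C + dist u ustar)\<^sup>2"
      using \<open>B > 0\<close> by (intro mult_left_mono power_mono) auto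
    then have "C + A + 2 * B * (dist (us n) ustar)\<^sup>2 \<le> 2 * B * R\<^sup>2"
      using \<open>K \<le> 2 * B * R\<^sup>2\<close> unfolding K_def by linarith
    then show ?case
      using yosida_restrict_ball_eq[OF lower_n \<open>B > 0\<close> _ \<open>8 * B * taus n \<le> 1\<close> fC \<open>0 \<le> R\<close>
          \<open>dist u2 (us n) + R \<le> r (\<epsilon> (taus n))\<close>] assms(5)
      by blast
  qed
qed

lemma A3_restrict_ball:
  assumes "A3 \<sigma> \<phi> f \<epsilon>" and "B > 0"
    and lower: "\<And>e u. e > 0 \<Longrightarrow> ereal (- A - B * (dist u ustar)\<^sup>2) \<le> f e u"
    and "\<forall>\<tau>>0. \<epsilon> \<tau> > 0"
    and "filterlim (\<lambda>\<tau>. r (\<epsilon> \<tau>)) at_top (at_right 0)"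
  shows "A3 \<sigma> \<phi> (\<lambda>e u. if dist u2 u \<le> r e then f e u else \<infinity>) \<epsilon>"
  unfolding A3_def
proof (intro allI impI)
  define g where "g = (\<lambda>e u. if dist u2 u \<le> r e then f e u else (\<infinity>::ereal))"
  fix taus :: "nat \<Rightarrow> real" and us u
  assume h: "(\<forall>n. taus n > 0) \<and> taus \<longlonglongrightarrow> 0 \<and> limitin \<sigma> us u sequentially \<and>
      (\<exists>C::real. \<forall>n. g (\<epsilon> (taus n)) (us n) \<le> ereal C \<and> dist (us n) u \<le> C)"
  then obtain C where gC: "\<And>n. g (\<epsilon> (taus n)) (us n) \<le> ereal C"
    and dC: "\<And>n. dist (us n) u \<le> C" by blast
  have gf: "g (\<epsilon> (taus n)) (us n) = f (\<epsilon> (taus n)) (us n)" for n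
    using gC[of n] by (auto simp: g_def split: if_splits)
  then have fC: "f (\<epsilon> (taus n)) (us n) \<le> ereal C" for n
    using gC[of n] by simp
  have "\<forall>\<^sub>F n in sequentially.
      yosida (taus n) (g (\<epsilon> (taus n))) (us n) = yosida (taus n) (f (\<epsilon> (taus n))) (us n)"
    unfolding g_def
    using eventually_yosida_restrict_ball_eq[where taus = taus and us = us and f = f and C = C,
        OF \<open>B > 0\<close> lower assms(4,5) _ _ fC dC] h by blast
  then have "liminf (\<lambda>n. (g (\<epsilon> (taus n)) (us n) - yosida (taus n) (g (\<epsilon> (taus n))) (us n))
                / ereal (taus n))
      = liminf (\<lambda>n. (f (\<epsilon> (taus n)) (us n) - yosida (taus n) (f (\<epsilon> (taus n))) (us n))
                / ereal (taus n))"
    by (intro Liminf_eq) (auto simp: gf elim: eventually_mono)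
  moreover have "(relaxed_slope \<sigma> \<phi> u) ^ 2 / 2 \<le> liminf (\<lambda>n. (f (\<epsilon> (taus n)) (us n)
      - yosida (taus n) (f (\<epsilon> (taus n))) (us n)) / ereal (taus n))"
    using assms(1) h fC dC unfolding A3_def by blast
  ultimately show "liminf (\<lambda>n. (g (\<epsilon> (taus n)) (us n) - yosida (taus n) (g (\<epsilon> (taus n))) (us n))
                / ereal (taus n)) \<ge> (relaxed_slope \<sigma> \<phi> u) ^ 2 / 2"
    by simp
qed

theorem mainTheorem9:
  fixes \<sigma> :: "'a::complete_space topology"
    and \<phi> :: "'a \<Rightarrow> ereal"
    and f :: "real \<Rightarrow> 'a \<Rightarrow> ereal"
    and \<epsilon> :: "real \<Rightarrow> real"
    and r :: "real \<Rightarrow> real"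
    and u2 :: 'a
  assumes "topspace \<sigma> = UNIV" and "Hausdorff_space \<sigma>" and "compatible \<sigma>"
    and "\<forall>u. \<phi> u > -\<infinity>"
    and "\<forall>e>0. \<forall>u. f e u > -\<infinity>"
    and "\<forall>\<tau>>0. \<epsilon> \<tau> > 0" and "(\<epsilon> \<longlongrightarrow> 0) (at_right 0)"
    and "A1 \<sigma> f" and "A2 \<sigma> \<phi> f" and "A3 \<sigma> \<phi> f \<epsilon>"
    and "\<forall>e>0. r e > 0"
    and "\<forall>e1 e2. 0 < e1 \<and> e1 \<le> e2 \<longrightarrow> r e2 \<le> r e1"
    and "filterlim r at_top (at_right 0)"
  shows "A1 \<sigma> (\<lambda>e u. if dist u2 u \<le> r e then f e u else \<infinity>) \<and>
         A2 \<sigma> \<phi> (\<lambda>e u. if dist u2 u \<le> r e then f e u else \<infinity>) \<and>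
         A3 \<sigma> \<phi> (\<lambda>e u. if dist u2 u \<le> r e then f e u else \<infinity>) \<epsilon>"
proof -
  have le: "f e u \<le> (if dist u2 u \<le> r e then f e u else \<infinity>)" for e u
    by simp
  obtain A B ustar where "B > 0"
    and lower: "\<And>e u. e > 0 \<Longrightarrow> ereal (- A - B * (dist u ustar)\<^sup>2) \<le> f e u"
    using assms(8) unfolding A1_def by blast
  have "filterlim \<epsilon> (at_right 0) (at_right 0)"
  proof (rule tendsto_imp_filterlim_at_right[OF assms(7)])
    show "\<forall>\<^sub>F \<tau> in at_right 0. 0 < \<epsilon> \<tau>"
      using eventually_at_right_less[of "0::real"] assms(6) by (auto elim: eventually_mono)
  qed
  then have "filterlim (\<lambda>\<tau>. r (\<epsilon> \<tau>)) at_top (at_right 0)"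
    by (rule filterlim_compose[OF assms(13)])
  then show ?thesis
    using A1_mono[OF assms(8) le] A2_mono[OF assms(9) le]
      A3_restrict_ball[OF assms(10) \<open>B > 0\<close> lower assms(6)] by simp
qed

end
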